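(* Let $\mathbb{E}(3,3)$ be the set of partitions in $\mathbb{C}(3,3)$ having no odd parts, and let $\mathbb{F}(3,3)$ be the set of pairs $(\pi,\zeta)$ of partitions such that $\pi\in\mathbb{E}(3,3)$ and $\zeta$ is a partition into distinct odd parts, each at least $2N_2(\pi)+1$ (the empty partition allowed). There is a bijection $\Phi\colon\mathbb{F}(3,3)\to\mathbb{C}(3,3)$ such that for every $(\pi,\zeta)\in\mathbb{F}(3,3)$, the partition $\omega=\Phi(\pi,\zeta)$ satisfies $|\omega|=|\pi|+|\zeta|$ and $\ell(\omega)=\ell(\pi)+\ell(\zeta)$.
   Context: A partition $\pi=(\pi_1,\dots,\pi_\ell)$ is a finite non-increasing sequence of positive integers; $\ell(\pi)$ is its number of parts and $|\pi|$ its sum. Göllnitz–Gordon marking: $GG(\pi)$ assigns a positive integer (mark) to each part, processing the parts from smallest to largest ($\pi_\ell,\dots,\pi_1$); $\pi_i$ receives the smallest positive integer different from the marks of all parts $\pi_g$ with $g>i$ and $\pi_i-\pi_g\le 2$, where $\pi_i-\pi_g<2$ is required when $\pi_i$ is odd. $N_2(\pi)$ is the number of parts of $\pi$ receiving mark $2$. $\mathbb{C}(3,3)$: the set of partitions $\pi=(\pi_1,\dots,\pi_\ell)$ such that (i) no odd part is repeated; (ii) $\pi_i\ge\pi_{i+2}+2$ for $1\le i\le\ell-2$, with strict inequality if $\pi_i$ is even; (iii) at most $2$ parts are $\le 2$. *)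

theory Defs
  imports Main
begin

text \<open>A partition is a list of positive naturals in non-increasing order
  (pi_1 >= pi_2 >= ... >= pi_l); index i of the paper is list index i-1.\<close>
definition is_partition :: "nat list \<Rightarrow> bool" where
  "is_partition p \<longleftrightarrow> sorted_wrt (\<ge>) p \<and> (\<forall>x\<in>set p. 0 < x)"

fun gg_marks :: "nat list \<Rightarrow> nat list" where
  "gg_marks [] = []"
| "gg_marks (x # xs) =
     (let ms = gg_marks xs;
          forb = {ms ! j | j. j < length xs \<and> x \<le> xs ! j + 2 \<and>
                               (odd x \<longrightarrow> x < xs ! j + 2)}
      in (LEAST m. 0 < m \<and> m \<notin> forb) # ms)"

definition N2 :: "nat list \<Rightarrow> nat" where
  "N2 p = length (filter (\<lambda>m. m = 2) (gg_marks p))"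

definition C33 :: "nat list set" where
  "C33 = {p. is_partition p
     \<and> (\<forall>i j. i < j \<and> j < length p \<and> p ! i = p ! j \<longrightarrow> even (p ! i))
     \<and> (\<forall>i. i + 2 < length p \<longrightarrow>
          p ! (i + 2) + 2 \<le> p ! i \<and> (even (p ! i) \<longrightarrow> p ! (i + 2) + 2 < p ! i))
     \<and> length (filter (\<lambda>x. x \<le> 2) p) \<le> 2}"

definition E33 :: "nat list set" where
  "E33 = {p \<in> C33. \<forall>x\<in>set p. even x}"

definition F33 :: "(nat list \<times> nat list) set" where
  "F33 = {(p, z). p \<in> E33 \<and> is_partition z \<and> distinct z \<and>
                  (\<forall>x\<in>set z. odd x \<and> 2 * N2 p + 1 \<le> x)}"

end

theory Submission
  imports Defs
begin

text \<open>\<Phi> inserts the odd parts of \<zeta> into \<pi> one at a time, smallest first. An odd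
  part t travels down from the top; whenever it passes a close pair of even parts, (y, y) or
  (y, y - 2), it raises that pair by 2 in total and continues as t - 2. This preserves the
  conditions of C(3,3) as long as t exceeds a bound read off the partition, and afterwards the
  bound is t. For an even partition the bound is 2 N2 - 1, because its Goellnitz-Gordon marks 2
  come from a greedy pairing of close parts; so distinct odd parts of size at least 2 N2 + 1
  can be inserted in increasing order. Conversely, the largest odd part of any partition in
  C(3,3) can be pulled back up, lowering again the pairs it passes, which undoes the last
  insertion.\<close>

section \<open>A recursive form of C(3,3)\<close>

fun admissible :: "nat list \<Rightarrow> bool" where
  "admissible [] = True"
| "admissible [a] = (0 < a)"
| "admissible [a, b] = (b \<le> a \<and> 0 < b \<and> (a = b \<longrightarrow> even a))"
| "admissible (a # b # c # r) =
     (b \<le> a \<and> (a = b \<longrightarrow> even a) \<and> c + 2 \<le> a \<and> (even a \<longrightarrow> c + 3 \<le> a) \<and> admissible (b # c # r))"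

lemma admissible_ConsD: "admissible (a # r) \<Longrightarrow> admissible r"
  by (induction r rule: admissible.induct) (auto split: if_splits)

lemma admissible_Cons_Cons_le: "admissible (a # b # r) \<Longrightarrow> b \<le> a \<and> (a = b \<longrightarrow> even a) \<and> 0 < b"
  by (cases r rule: admissible.cases) (auto dest: admissible_ConsD)

lemma admissible_hd_pos: "admissible (a # r) \<Longrightarrow> 0 < a"
  by (cases r rule: admissible.cases) (auto dest: admissible_ConsD)

lemma admissible_Cons_ge: "admissible (a # p) \<Longrightarrow> x \<in> set p \<Longrightarrow> x \<le> a"
proof (induction p arbitrary: a)
  case (Cons b r)
  have "b \<le> a" using admissible_Cons_Cons_le[OF Cons.prems(1)] by simp
  moreover have "x \<le> b" if "x \<in> set r"
    using Cons.IH[OF admissible_ConsD[OF Cons.prems(1)] that] .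
  ultimately show ?case using Cons.prems(2) by (metis order_trans set_ConsD)
qed simp

lemma admissible_sorted: "admissible p \<Longrightarrow> sorted_wrt (\<ge>) p"
proof (induction p)
  case (Cons a p)
  then show ?case using admissible_Cons_ge[of a p] admissible_ConsD[of a p] by simp
qed simp

lemma admissible_is_partition: "admissible p \<Longrightarrow> is_partition p"
proof (induction p)
  case (Cons a p)
  then show ?case
    using admissible_sorted[OF Cons.prems] admissible_hd_pos[OF Cons.prems]
      admissible_ConsD[OF Cons.prems] by (simp add: is_partition_def)
qed (simp add: is_partition_def)

lemma admissible_drop: "admissible p \<Longrightarrow> admissible (drop i p)"
proof (induction i arbitrary: p)
  case (Suc i)
  then show ?case by (cases p) (auto dest: admissible_ConsD)
qed simp

lemma admissible_few_small: "admissible p \<Longrightarrow> length (filter (\<lambda>x. x \<le> 2) p) \<le> 2"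
proof (induction p rule: admissible.induct)
  case (4 a b c r)
  have "admissible (b # c # r)" using admissible_ConsD[OF "4.prems"] .
  moreover have "0 < c" using admissible_hd_pos admissible_ConsD calculation by blast
  ultimately show ?case using "4.IH" "4.prems" by simp
qed auto

lemma drop_nth_Cons_Cons:
  "Suc i < length p \<Longrightarrow> drop i p = p ! i # p ! Suc i # drop (Suc (Suc i)) p"
  by (simp add: Cons_nth_drop_Suc)

lemma admissible_C33: "admissible p \<Longrightarrow> p \<in> C33"
proof -
  assume adm: "admissible p"
  have sorted: "sorted_wrt (\<ge>) p" using admissible_sorted[OF adm] .
  have adjacent: "even (p ! i)" if "Suc i < length p" "p ! i = p ! Suc i" for i
    using admissible_drop[OF adm, of i] drop_nth_Cons_Cons[OF that(1)] that(2)
      admissible_Cons_Cons_le by metis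
  have repeated: "even (p ! i)" if "i < j" "j < length p" "p ! i = p ! j" for i j
  proof -
    have "p ! j \<le> p ! Suc i"
    proof (cases "j = Suc i")
      case False
      then show ?thesis using sorted that unfolding sorted_wrt_iff_nth_less by simp
    qed simp
    moreover have "p ! Suc i \<le> p ! i"
      using sorted that(1,2) unfolding sorted_wrt_iff_nth_less by simp
    ultimately have "p ! i = p ! Suc i" using that(3) by simp
    then show ?thesis using adjacent that by simp
  qed
  have gap: "p ! (i + 2) + 2 \<le> p ! i \<and> (even (p ! i) \<longrightarrow> p ! (i + 2) + 2 < p ! i)"
    if "i + 2 < length p" for i
  proof -
    have "drop i p = p ! i # p ! (i + 1) # p ! (i + 2) # drop (i + 3) p"
      using that by (simp add: Cons_nth_drop_Suc numeral_3_eq_3 numeral_2_eq_2)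
    then have "admissible (p ! i # p ! (i + 1) # p ! (i + 2) # drop (i + 3) p)"
      using admissible_drop[OF adm, of i] by simp
    then show ?thesis by auto
  qed
  show ?thesis
    unfolding C33_def
    using admissible_is_partition[OF adm] repeated gap admissible_few_small[OF adm]
    by blast
qed

lemma C33_D:
  assumes "p \<in> C33"
  shows "is_partition p"
    and "\<And>i j. i < j \<Longrightarrow> j < length p \<Longrightarrow> p ! i = p ! j \<Longrightarrow> even (p ! i)"
    and "\<And>i. i + 2 < length p \<Longrightarrow>
      p ! (i + 2) + 2 \<le> p ! i \<and> (even (p ! i) \<longrightarrow> p ! (i + 2) + 2 < p ! i)"
    and "length (filter (\<lambda>x. x \<le> 2) p) \<le> 2"
  using assms unfolding C33_def by blast+

lemma C33_ConsD: "a # p \<in> C33 \<Longrightarrow> p \<in> C33"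
proof -
  assume C: "a # p \<in> C33"
  note C = C33_D[OF C]
  have "\<forall>i j. i < j \<and> j < length p \<and> p ! i = p ! j \<longrightarrow> even (p ! i)"
  proof (intro allI impI)
    fix i j assume "i < j \<and> j < length p \<and> p ! i = p ! j"
    then show "even (p ! i)" using C(2)[of "Suc i" "Suc j"] by simp
  qed
  moreover have "\<forall>i. i + 2 < length p \<longrightarrow>
      p ! (i + 2) + 2 \<le> p ! i \<and> (even (p ! i) \<longrightarrow> p ! (i + 2) + 2 < p ! i)"
    using C(3)[of "Suc i" for i] by simp
  moreover have "length (filter (\<lambda>x. x \<le> 2) p) \<le> 2"
    using C(4) by (simp split: if_splits)
  ultimately show ?thesis using C(1) unfolding C33_def is_partition_def by simp
qed

lemma C33_admissible: "p \<in> C33 \<Longrightarrow> admissible p"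
proof (induction p rule: admissible.induct)
  case (2 a)
  then show ?case by (simp add: C33_def is_partition_def)
next
  case (3 a b)
  note C = C33_D[OF "3.prems"]
  have "b \<le> a" "0 < b" using C(1) by (auto simp: is_partition_def)
  moreover have "a = b \<longrightarrow> even a" using C(2)[of 0 1] by simp
  ultimately show ?case by simp
next
  case (4 a b c r)
  note C = C33_D[OF "4.prems"]
  have "b \<le> a" using C(1) by (auto simp: is_partition_def)
  moreover have "a = b \<longrightarrow> even a" using C(2)[of 0 1] by simp
  moreover have "c + 2 \<le> a \<and> (even a \<longrightarrow> c + 2 < a)" using C(3)[of 0] by simp
  ultimately show ?case using "4.IH"[OF C33_ConsD[OF "4.prems"]] by auto
qed simp

lemma mem_C33_iff_admissible: "p \<in> C33 \<longleftrightarrow> admissible p"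
  using C33_admissible admissible_C33 by blast

section \<open>Goellnitz-Gordon marks of even partitions\<close>

fun close_pairs :: "nat list \<Rightarrow> nat" where
  "close_pairs (x # y # r) = (if x \<le> y + 2 then Suc (close_pairs r) else close_pairs (y # r))"
| "close_pairs _ = 0"

lemma length_gg_marks: "length (gg_marks xs) = length xs"
  by (induction xs) (auto simp: Let_def)

lemma Least_pos_notin_subsingleton:
  assumes "F = {} \<or> (\<exists>k. F = {k})"
  shows "(LEAST m::nat. 0 < m \<and> m \<notin> F) = (if 1 \<in> F then 2 else 1)"
proof (cases "1 \<in> F")
  case True
  then have "F = {1}" using assms by auto
  then show ?thesis by (auto intro: Least_equality)
qed (auto intro: Least_equality)

lemma admissible_even_far:
  assumes adm: "admissible (x # xs)" and even: "\<forall>v\<in>set (x # xs). even v"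
    and j: "0 < j" "j < length xs"
  shows "xs ! j + 2 < x"
proof -
  obtain a b r where xs: "xs = a # b # r"
    using j by (cases xs; cases "tl xs") auto
  have "xs ! j \<le> b"
  proof (cases "j = 1")
    case False
    have "sorted_wrt (\<ge>) xs" using admissible_sorted admissible_ConsD adm by blast
    then have "xs ! j \<le> xs ! 1" using False j unfolding sorted_wrt_iff_nth_less by simp
    then show ?thesis using xs by simp
  qed (simp add: xs)
  moreover have "b + 3 \<le> x" "even b" "even x" using adm even xs by auto
  ultimately show ?thesis by presburger
qed

text \<open>Among the smaller parts, only the next one can be within distance 2 of an even
  part, so the Goellnitz-Gordon mark is 2 exactly when that part carries mark 1.\<close>
lemma gg_marks_even_Cons:
  assumes adm: "admissible (x # xs)" and even: "\<forall>v\<in>set (x # xs). even v"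
  shows "gg_marks (x # xs) =
    (if xs \<noteq> [] \<and> x \<le> hd xs + 2 \<and> hd (gg_marks xs) = 1 then 2 else 1) # gg_marks xs"
proof -
  define ms where "ms = gg_marks xs"
  define forb where "forb = {ms ! j | j. j < length xs \<and> x \<le> xs ! j + 2 \<and>
                               (odd x \<longrightarrow> x < xs ! j + 2)}"
  have "forb = {ms ! j | j. j = 0 \<and> j < length xs \<and> x \<le> xs ! j + 2}"
    unfolding forb_def using admissible_even_far[OF adm even] even
    by (auto simp: not_less[symmetric]; metis gr0I)
  also have "\<dots> = (if xs \<noteq> [] \<and> x \<le> hd xs + 2 then {hd ms} else {})"
  proof (cases xs)
    case (Cons a l)
    then have "ms \<noteq> []" using length_gg_marks[of xs] by (auto simp: ms_def)
    then have "hd ms = ms ! 0" by (simp add: hd_conv_nth)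
    then show ?thesis using Cons by auto
  qed simp
  finally have forb_eq: "forb = (if xs \<noteq> [] \<and> x \<le> hd xs + 2 then {hd ms} else {})" .
  have "gg_marks (x # xs) = (LEAST m. 0 < m \<and> m \<notin> forb) # ms"
    by (simp add: Let_def ms_def forb_def)
  also have "(LEAST m. 0 < m \<and> m \<notin> forb) = (if 1 \<in> forb then 2 else 1)"
    by (rule Least_pos_notin_subsingleton) (simp add: forb_eq)
  finally show ?thesis using forb_eq by (auto simp: ms_def)
qed

lemma N2_eq_close_pairs:
  "admissible l \<Longrightarrow> \<forall>v\<in>set l. even v \<Longrightarrow> N2 l = close_pairs l"
proof (induction l rule: close_pairs.induct)
  case (1 x y r)
  have adm: "admissible (y # r)" "admissible r"
    using "1.prems"(1) admissible_ConsD by blast+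
  have even: "\<forall>v\<in>set (y # r). even v" "\<forall>v\<in>set r. even v" using "1.prems"(2) by simp_all
  have marks_y: "gg_marks (y # r) =
      (if r \<noteq> [] \<and> y \<le> hd r + 2 \<and> hd (gg_marks r) = 1 then 2 else 1) # gg_marks r"
    using gg_marks_even_Cons[OF adm(1) even(1)] .
  have N2_x: "N2 (x # y # r) =
      N2 (y # r) + (if x \<le> y + 2 \<and> hd (gg_marks (y # r)) = 1 then 1 else 0)"
    using gg_marks_even_Cons[OF "1.prems"] by (simp add: N2_def)
  show ?case
  proof (cases "x \<le> y + 2")
    case True
    \<comment> \<open>whichever mark y receives, exactly one of x and y gets mark 2\<close>
    then show ?thesis using "1.IH"(1)[OF True adm(2) even(2)] N2_x marks_y by (auto simp: N2_def)
  next
    case False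
    then show ?thesis using "1.IH"(2)[OF False adm(1) even(1)] N2_x by simp
  qed
next
  case ("2_2" v)
  have "(LEAST m::nat. 0 < m) = 1" by (rule Least_equality) auto
  then show ?case by (simp add: N2_def Let_def)
qed (simp add: N2_def)

section \<open>Inserting an odd part\<close>

text \<open>The exception in the first case: t = y + 1 cannot stand above the pair (y, y),
  since parts two apart must differ by at least 2.\<close>
fun insert_odd :: "nat \<Rightarrow> nat list \<Rightarrow> nat list" where
  "insert_odd t [] = [t]"
| "insert_odd t [y] = (if y < t then [t, y] else [y, t])"
| "insert_odd t (y # y' # r) =
     (if y < t \<and> \<not> (y' = y \<and> y + 1 = t) then t # y # y' # r
      else if y = y' then (y + 2) # y # insert_odd (t - 2) r
      else if y = y' + 2 then y # y # insert_odd (t - 2) r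
      else y # insert_odd t (y' # r))"

text \<open>An odd part above this bound can be inserted: it is the first odd part met on the way
  down, plus 2 for every close pair of even parts passed before it.\<close>
fun ins_bound :: "nat list \<Rightarrow> int" where
  "ins_bound [] = -1"
| "ins_bound [x] = (if odd x then int x else -1)"
| "ins_bound (x # y # r) =
     (if odd x then int x else if even y \<and> x \<le> y + 2 then ins_bound r + 2 else ins_bound (y # r))"

definition insertable :: "nat \<Rightarrow> nat list \<Rightarrow> bool" where
  "insertable t r \<longleftrightarrow> odd t \<and> ins_bound r < int t"

definition apart :: "nat \<Rightarrow> nat list \<Rightarrow> bool" where
  "apart a r \<longleftrightarrow> r = [] \<or> odd (hd r) \<or> hd r + 4 \<le> a"

lemma ins_bound_ge: "ins_bound r \<ge> -1"
  by (induction r rule: ins_bound.induct) auto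

lemma ins_bound_even: "\<forall>x\<in>set l. even x \<Longrightarrow> ins_bound l = 2 * int (close_pairs l) - 1"
  by (induction l rule: close_pairs.induct) auto

lemma ins_bound_less: "admissible (x # w) \<Longrightarrow> ins_bound w < int x"
proof (induction w arbitrary: x rule: ins_bound.induct)
  case (2 a)
  then show ?case by (auto simp: le_less)
next
  case (3 a b r)
  have adm: "admissible (a # b # r)" "admissible (b # r)"
    using "3.prems" admissible_ConsD by blast+
  have "a \<le> x" "odd a \<Longrightarrow> a < x"
    using admissible_Cons_Cons_le[OF "3.prems"] by (auto simp: le_less)
  moreover have "b + 2 \<le> x" using "3.prems" by simp
  ultimately show ?case using "3.IH"(1)[OF _ _ adm(2)] "3.IH"(2)[OF _ _ adm(1)] by auto
qed simp

lemma ins_bound_Cons_apart: "even a \<Longrightarrow> apart a r \<Longrightarrow> ins_bound (a # r) = ins_bound r"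
  by (cases r rule: ins_bound.cases) (auto simp: apart_def)

lemma insertable_minus_2: "ins_bound r + 2 < int t \<Longrightarrow> odd t \<Longrightarrow> insertable (t - 2) r"
  using ins_bound_ge[of r] unfolding insertable_def by presburger

lemma length_insert_odd: "length (insert_odd t r) = Suc (length r)"
  by (induction t r rule: insert_odd.induct) auto

lemma insert_odd_top:
  assumes "admissible (x # w)" "odd x"
  shows "insert_odd x w = x # w"
proof (cases w rule: admissible.cases)
  case (4 a b c r)
  then have "a < x" "b + 2 \<le> x" using assms admissible_Cons_Cons_le[of x a] by (auto simp: le_less)
  then show ?thesis using 4 by auto
qed (use assms in \<open>auto simp: le_less\<close>)

lemma insert_odd_passing:
  assumes adm: "admissible (y # y' # r)" and ins: "insertable t (y # y' # r)"
    and pass: "\<not> (y < t \<and> \<not> (y' = y \<and> y + 1 = t))"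
  shows "even y" "t \<le> y + 1" "y' = y \<or> t < y" "admissible r" "apart y r"
proof -
  have y'y: "y' \<le> y" "y = y' \<Longrightarrow> even y" using admissible_Cons_Cons_le[OF adm] by auto
  have t: "odd t" "ins_bound (y # y' # r) < int t" using ins unfolding insertable_def by auto
  show "even y"
  proof (rule ccontr)
    assume "odd y"
    then have "t \<le> y" using pass y'y by auto
    then show False using t \<open>odd y\<close> by simp
  qed
  then show "t \<le> y + 1" "y' = y \<or> t < y" using pass t(1) by (auto simp: le_less)
  show "admissible r" using adm admissible_ConsD by blast
  show "apart y r"
  proof (cases r)
    case (Cons c r')
    then have "c + 3 \<le> y" using adm \<open>even y\<close> by simp
    then have "odd c \<or> c + 4 \<le> y" using \<open>even y\<close> by presburger
    then show ?thesis using Cons by (simp add: apart_def)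
  qed (simp add: apart_def)
qed

lemma insert_odd_passing_cases:
  assumes adm: "admissible (y # y' # r)" and ins: "insertable t (y # y' # r)"
    and pass: "\<not> (y < t \<and> \<not> (y' = y \<and> y + 1 = t))"
  obtains (raise) "y = y'" "insert_odd t (y # y' # r) = (y + 2) # y # insert_odd (t - 2) r"
      "ins_bound (y # y' # r) = ins_bound r + 2" "insertable (t - 2) r" "3 \<le> t"
  | (fill) "y \<noteq> y'" "y = y' + 2" "insert_odd t (y # y' # r) = y # y # insert_odd (t - 2) r"
      "ins_bound (y # y' # r) = ins_bound r + 2" "insertable (t - 2) r" "3 \<le> t" "t < y"
  | (skip) "y \<noteq> y'" "y \<noteq> y' + 2" "insert_odd t (y # y' # r) = y # insert_odd t (y' # r)"
      "ins_bound (y # y' # r) = ins_bound (y' # r)" "insertable t (y' # r)" "t < y"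
      "apart y (y' # r)"
proof -
  note facts = insert_odd_passing[OF adm ins pass]
  have "y' \<le> y" using admissible_Cons_Cons_le[OF adm] by simp
  have t: "odd t" "ins_bound (y # y' # r) < int t" using ins unfolding insertable_def by auto
  have pair: "ins_bound (y # y' # r) = ins_bound r + 2 \<and> insertable (t - 2) r \<and> 3 \<le> t"
    if "y' \<le> y" "y \<le> y' + 2" "even y'"
  proof -
    have "ins_bound (y # y' # r) = ins_bound r + 2" using facts(1) that by simp
    moreover have "3 \<le> t" using calculation t ins_bound_ge[of r] by presburger
    ultimately show ?thesis using insertable_minus_2 t by auto
  qed
  consider "y = y'" | "y \<noteq> y'" "y = y' + 2" | "y \<noteq> y'" "y \<noteq> y' + 2" by blast
  then show ?thesis
  proof cases
    case 1
    then show ?thesis using raise pair pass facts(1) by simp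
  next
    case 2
    then show ?thesis using fill pair pass facts by simp
  next
    case 3
    have "odd y' \<or> y' + 4 \<le> y" using 3 \<open>y' \<le> y\<close> facts(1) by presburger
    then have "apart y (y' # r)" "ins_bound (y # y' # r) = ins_bound (y' # r)"
      using facts(1) by (auto simp: apart_def)
    then show ?thesis using skip 3 pass facts t by (simp add: insertable_def)
  qed
qed

lemma ins_bound_insert_odd_Cons:
  "admissible r \<Longrightarrow> insertable t r \<Longrightarrow>
    ins_bound (insert_odd t r) = int t \<and>
    (\<forall>a. even a \<and> apart a r \<longrightarrow> ins_bound (a # insert_odd t r) = int t)"
proof (induction t r rule: insert_odd.induct)
  case (3 t y y' r)
  show ?case
  proof (cases "y < t \<and> \<not> (y' = y \<and> y + 1 = t)")
    case pass: False
    note facts = insert_odd_passing[OF "3.prems" pass]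
    have "ins_bound (insert_odd t (y # y' # r)) = int t \<and>
      (\<forall>a. even a \<and> y + 2 < a \<longrightarrow> ins_bound (a # insert_odd t (y # y' # r)) = int t)"
      using "3.prems" pass
    proof (cases rule: insert_odd_passing_cases)
      case raise
      note IH = "3.IH"(1)[OF pass raise(1) facts(4) raise(4)]
      then have "ins_bound (y # insert_odd (t - 2) r) = int t - 2" using facts(1,5) raise(5) by auto
      then show ?thesis using raise IH facts(1) by auto
    next
      case fill
      then show ?thesis using "3.IH"(2)[OF pass fill(1,2) facts(4) fill(5)] facts(1) by auto
    next
      case skip
      then show ?thesis
        using "3.IH"(3)[OF pass skip(1,2) admissible_ConsD[OF "3.prems"(1)] skip(5)] facts(1)
        by auto
    qed
    moreover have "y + 2 < a" if "apart a (y # y' # r)" "even a" for a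
      using that facts(1) unfolding apart_def by auto
    ultimately show ?thesis by blast
  next
    case True
    moreover have "odd t" using "3.prems"(2) by (simp add: insertable_def)
    ultimately show ?thesis by simp
  qed
qed (auto simp: insertable_def apart_def split: if_splits)

lemma ins_bound_insert_odd:
  "admissible r \<Longrightarrow> insertable t r \<Longrightarrow> ins_bound (insert_odd t r) = int t"
  using ins_bound_insert_odd_Cons by blast

lemma insertable_singleton: "insertable t [y] \<Longrightarrow> \<not> y < t \<Longrightarrow> even y \<and> t < y"
proof -
  assume "insertable t [y]" "\<not> y < t"
  moreover have "odd t" "odd y \<Longrightarrow> y < t" using \<open>insertable t [y]\<close> by (auto simp: insertable_def)
  ultimately show ?thesis by (cases "t = y") auto
qed

lemma sorted_list_all2_take_Cons:
  "sorted_wrt (\<ge>) (x # r) \<Longrightarrow> list_all2 (\<le>) r (take (length r) (x # r))"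
proof (induction r arbitrary: x)
  case (Cons a r)
  then show ?case by simp
qed simp

lemma insert_odd_dominates:
  "admissible r \<Longrightarrow> insertable t r \<Longrightarrow>
    t \<le> hd (insert_odd t r) \<and> list_all2 (\<le>) r (take (length r) (insert_odd t r))"
proof (induction t r rule: insert_odd.induct)
  case (2 t y)
  have "even y \<and> t < y" if "\<not> y < t" using insertable_singleton "2.prems"(2) that by blast
  then show ?case by auto
next
  case (3 t y y' r)
  show ?case
  proof (cases "y < t \<and> \<not> (y' = y \<and> y + 1 = t)")
    case True
    have sorted: "sorted_wrt (\<ge>) (t # y # y' # r)"
      using True admissible_sorted[OF "3.prems"(1)] by auto
    show ?thesis using True sorted_list_all2_take_Cons[OF sorted] by simp
  next
    case pass: False
    note facts = insert_odd_passing[OF "3.prems" pass]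
    have "y' \<le> y" using admissible_Cons_Cons_le[OF "3.prems"(1)] by simp
    from "3.prems" pass show ?thesis
    proof (cases rule: insert_odd_passing_cases)
      case raise
      then show ?thesis using "3.IH"(1)[OF pass raise(1) facts(4) raise(4)] facts(2) by simp
    next
      case fill
      then show ?thesis using "3.IH"(2)[OF pass fill(1,2) facts(4) fill(5)] \<open>y' \<le> y\<close> by simp
    next
      case skip
      then show ?thesis
        using "3.IH"(3)[OF pass skip(1,2) admissible_ConsD[OF "3.prems"(1)] skip(5)] by simp
    qed
  qed
qed simp

lemma sum_list_count_odd_insert_odd:
  "admissible r \<Longrightarrow> insertable t r \<Longrightarrow>
    sum_list (insert_odd t r) = t + sum_list r \<and>
    length (filter odd (insert_odd t r)) = Suc (length (filter odd r))"
proof (induction t r rule: insert_odd.induct)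
  case (3 t y y' r)
  show ?case
  proof (cases "y < t \<and> \<not> (y' = y \<and> y + 1 = t)")
    case pass: False
    note facts = insert_odd_passing[OF "3.prems" pass]
    from "3.prems" pass show ?thesis
    proof (cases rule: insert_odd_passing_cases)
      case raise
      then show ?thesis using "3.IH"(1)[OF pass raise(1) facts(4) raise(4)] facts(1) by simp
    next
      case fill
      then show ?thesis using "3.IH"(2)[OF pass fill(1,2) facts(4) fill(5)] facts(1) by simp
    next
      case skip
      then show ?thesis
        using "3.IH"(3)[OF pass skip(1,2) admissible_ConsD[OF "3.prems"(1)] skip(5)] facts(1)
        by simp
    qed
  next
    case True
    then show ?thesis using "3.prems"(2) by (simp add: insertable_def)
  qed
qed (auto simp: insertable_def)

text \<open>Two even parts q \<ge> p stand above r while t is inserted into r. When q = p, the pair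
  arose from (p, p - 2), whose admissibility constrains r more strongly.\<close>
definition fits_below :: "nat \<Rightarrow> nat \<Rightarrow> nat \<Rightarrow> nat list \<Rightarrow> bool" where
  "fits_below q p t r \<longleftrightarrow> even q \<and> even p \<and> p \<le> q \<and>
     (if q = p then admissible (p # (p - 2) # r) else admissible (q # p # r)) \<and>
     insertable t r \<and> t < p \<and> t + 3 \<le> q \<and> apart p r"

lemma fits_below_Cons:
  assumes "fits_below q p t (y # r)"
  shows "admissible (y # r)" "y \<le> p" "q = p \<Longrightarrow> y + 3 \<le> p" "odd y \<or> y + 4 \<le> p"
    "r \<noteq> [] \<Longrightarrow> hd r + 3 \<le> p" "r \<noteq> [] \<Longrightarrow> q = p \<Longrightarrow> hd r + 5 \<le> p"
proof -
  have p: "even p" "even q" "p \<le> q" using assms by (auto simp: fits_below_def)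
  show "odd y \<or> y + 4 \<le> p" using assms by (simp add: fits_below_def apart_def)
  have "admissible (y # r) \<and> y \<le> p \<and> (q = p \<longrightarrow> y + 3 \<le> p) \<and>
    (r \<noteq> [] \<longrightarrow> hd r + 3 \<le> p \<and> (q = p \<longrightarrow> hd r + 5 \<le> p))"
  proof (cases "q = p")
    case True
    then have adm: "admissible (p # (p - 2) # y # r)" using assms by (simp add: fits_below_def)
    then have "admissible (y # r)" using admissible_ConsD by blast
    moreover have "r \<noteq> [] \<longrightarrow> hd r + 5 \<le> p" using adm p by (cases r) auto
    ultimately show ?thesis using adm p True by auto
  next
    case False
    then have adm: "admissible (q # p # y # r)" using assms by (simp add: fits_below_def)
    then have "admissible (y # r)" using admissible_ConsD by blast
    moreover have "r \<noteq> [] \<longrightarrow> hd r + 3 \<le> p" using adm p by (cases r) auto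
    ultimately show ?thesis
      using adm p False admissible_Cons_Cons_le[of p y r] admissible_ConsD by auto
  qed
  then show "admissible (y # r)" "y \<le> p" "q = p \<Longrightarrow> y + 3 \<le> p" "r \<noteq> [] \<Longrightarrow> hd r + 3 \<le> p"
    "r \<noteq> [] \<Longrightarrow> q = p \<Longrightarrow> hd r + 5 \<le> p" by auto
qed

lemma admissible_insert_odd_below: "fits_below q p t r \<Longrightarrow> admissible (q # p # insert_odd t r)"
proof (induction t r arbitrary: q p rule: insert_odd.induct)
  case (1 t)
  then show ?case by (auto simp: fits_below_def insertable_def odd_pos)
next
  case (2 t y)
  then show ?case
    by (auto simp: fits_below_def insertable_def apart_def odd_pos split: if_splits; presburger)
next
  case (3 t y y' r)
  note below = fits_below_Cons[OF "3.prems"]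
  have qpt: "even q" "even p" "p \<le> q" "insertable t (y # y' # r)" "t < p" "t + 3 \<le> q"
    using "3.prems" by (auto simp: fits_below_def)
  have y'y: "y' \<le> y" "y' = y \<Longrightarrow> even y" using admissible_Cons_Cons_le[OF below(1)] by auto
  show ?case
  proof (cases "y < t \<and> \<not> (y' = y \<and> y + 1 = t)")
    case True
    have "odd t" using qpt(4) by (simp add: insertable_def)
    then have "y + 3 \<le> p" "y' + 2 \<le> t" using True qpt below(4) y'y by presburger+
    then show ?thesis using True qpt below(1) \<open>odd t\<close> y'y by (simp add: odd_pos)
  next
    case pass: False
    note facts = insert_odd_passing[OF below(1) qpt(4) pass]
    have "y + 4 \<le> p" using below(4) facts(1) by auto
    from below(1) qpt(4) pass show ?thesis
    proof (cases rule: insert_odd_passing_cases)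
      case raise
      have "q = p \<Longrightarrow> y + 5 \<le> p" using below(6) raise(1) by simp
      then have "y + 5 \<le> q" using qpt \<open>y + 4 \<le> p\<close> by presburger
      have "fits_below (y + 2) y (t - 2) r"
        using raise below(1) facts qpt by (cases r) (auto simp: fits_below_def)
      then show ?thesis using "3.IH"(1)[OF pass raise(1)] raise(2) qpt \<open>y + 4 \<le> p\<close> \<open>y + 5 \<le> q\<close>
        by simp
    next
      case fill
      have "fits_below y y (t - 2) r" using fill below(1) facts by (auto simp: fits_below_def)
      then show ?thesis using "3.IH"(2)[OF pass fill(1,2)] fill(3) qpt \<open>y + 4 \<le> p\<close> by simp
    next
      case skip
      have "y' + 3 \<le> p" using below(5) by simp
      then have "fits_below p y t (y' # r)"
        using skip below(1) facts qpt \<open>y + 4 \<le> p\<close> y'y by (auto simp: fits_below_def)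
      then show ?thesis using "3.IH"(3)[OF pass skip(1,2)] skip(3) qpt \<open>y + 4 \<le> p\<close> by simp
    qed
  qed
qed

lemma admissible_insert_odd: "admissible r \<Longrightarrow> insertable t r \<Longrightarrow> admissible (insert_odd t r)"
proof -
  assume adm: "admissible r" and ins: "insertable t r"
  \<comment> \<open>a fictitious pair (K, K) of large even parts above r\<close>
  define K where "K = 2 * (t + hd (r @ [0])) + 10"
  have "fits_below K K t r"
  proof (cases r)
    case (Cons h r')
    have "admissible (K # (K - 2) # h # r')"
    proof (cases r')
      case (Cons h' r'')
      have "h' \<le> h" using adm \<open>r = h # r'\<close> Cons admissible_Cons_Cons_le by blast
      then show ?thesis using adm \<open>r = h # r'\<close> Cons by (auto simp: K_def)
    qed (use adm Cons in \<open>auto simp: K_def admissible_hd_pos\<close>)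
    then show ?thesis using ins Cons by (auto simp: fits_below_def K_def insertable_def apart_def)
  qed (use ins in \<open>auto simp: fits_below_def K_def insertable_def apart_def\<close>)
  then show ?thesis using admissible_insert_odd_below admissible_ConsD by blast
qed

section \<open>Extracting the largest odd part\<close>

text \<open>Undoes \<^const>\<open>insert_odd\<close> on the largest odd part: going back up, every close pair
  it crossed is lowered by 2 and the odd part regains 2.\<close>
fun extract_step :: "nat \<Rightarrow> nat \<times> nat list \<Rightarrow> nat \<times> nat list" where
  "extract_step x (t, r) =
     (if r \<noteq> [] \<and> hd r = x then (t + 2, x # (x - 2) # tl r)
      else if r \<noteq> [] \<and> hd r + 2 = x then (t + 2, (x - 2) # r)
      else (t, x # r))"

fun extract_odd :: "nat list \<Rightarrow> nat \<times> nat list" where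
  "extract_odd [] = (0, [])"
| "extract_odd (x # r) = (if odd x then (x, r) else extract_step x (extract_odd r))"

lemma extract_odd_insert_odd:
  "admissible r \<Longrightarrow> insertable t r \<Longrightarrow> extract_odd (insert_odd t r) = (t, r)"
proof (induction t r rule: insert_odd.induct)
  case (2 t y)
  have "even y \<and> t < y" if "\<not> y < t" using insertable_singleton "2.prems"(2) that by blast
  then show ?case using "2.prems"(2) by (auto simp: insertable_def)
next
  case (3 t y y' r)
  show ?case
  proof (cases "y < t \<and> \<not> (y' = y \<and> y + 1 = t)")
    case pass: False
    note facts = insert_odd_passing[OF "3.prems" pass]
    have below: "hd r \<noteq> y \<and> hd r + 2 \<noteq> y" if "r \<noteq> []"
      using facts(1,5) that by (auto simp: apart_def)
    from "3.prems" pass show ?thesis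
    proof (cases rule: insert_odd_passing_cases)
      case raise
      have "extract_odd (y # insert_odd (t - 2) r) = (t - 2, y # r)"
        using "3.IH"(1)[OF pass raise(1) facts(4) raise(4)] below facts(1) by auto
      then show ?thesis unfolding raise(2) using raise(1,5) facts(1) by simp
    next
      case fill
      have "extract_odd (y # insert_odd (t - 2) r) = (t - 2, y # r)"
        using "3.IH"(2)[OF pass fill(1,2) facts(4) fill(5)] below facts(1) by auto
      then show ?thesis unfolding fill(3) using fill(2,6) facts(1) by simp
    next
      case skip
      then show ?thesis unfolding skip(3)
        using "3.IH"(3)[OF pass skip(1,2) admissible_ConsD[OF "3.prems"(1)] skip(5)] facts(1)
        by simp
    qed
  next
    case True
    then show ?thesis using "3.prems"(2) by (simp add: insertable_def)
  qed
qed (simp add: insertable_def)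

lemma hd_insert_odd_Cons_Cons:
  assumes adm: "admissible (y # c # r)" and ins: "insertable t (y # c # r)"
  shows "c + 2 \<le> hd (insert_odd t (y # c # r)) \<or> odd c \<and> c + 1 \<le> hd (insert_odd t (y # c # r))"
proof (cases "y < t \<and> \<not> (c = y \<and> y + 1 = t)")
  case True
  have "c \<le> y" "c = y \<Longrightarrow> even y" using admissible_Cons_Cons_le[OF adm] by auto
  moreover have "odd t" using ins by (simp add: insertable_def)
  ultimately show ?thesis using True by simp presburger
next
  case pass: False
  have "c \<le> y" using admissible_Cons_Cons_le[OF adm] by simp
  from adm ins pass show ?thesis
  proof (cases rule: insert_odd_passing_cases)
    case skip
    then show ?thesis using \<open>c \<le> y\<close> by (auto simp: apart_def)
  qed simp_all
qed

lemma insert_odd_skips_top: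
  assumes adm: "admissible (a # y' # r)" and ins: "insertable t (a # y' # r)"
    and top: "admissible (x # insert_odd t (a # y' # r))" and x: "even x" "x \<le> a + 2"
  shows "insert_odd t (a # y' # r) = a # insert_odd t (y' # r)" "a \<noteq> y'" "a \<noteq> y' + 2"
    "t < a" "insertable t (y' # r)"
proof -
  have "insert_odd t (a # y' # r) = a # insert_odd t (y' # r) \<and> a \<noteq> y' \<and> a \<noteq> y' + 2 \<and>
    t < a \<and> insertable t (y' # r)"
  proof (cases "a < t \<and> \<not> (y' = a \<and> a + 1 = t)")
    case True
    then show ?thesis using top x by auto
  next
    case pass: False
    from adm ins pass show ?thesis
    proof (cases rule: insert_odd_passing_cases)
      case raise
      then show ?thesis using top x by auto
    next
      case fill
      then show ?thesis using top x by auto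
    qed simp
  qed
  then show "insert_odd t (a # y' # r) = a # insert_odd t (y' # r)" "a \<noteq> y'" "a \<noteq> y' + 2"
    "t < a" "insertable t (y' # r)" by auto
qed

lemma insert_odd_less_top:
  "admissible r \<Longrightarrow> insertable t r \<Longrightarrow> admissible (x # insert_odd t r) \<Longrightarrow> t < x"
  using ins_bound_less[of x "insert_odd t r"] ins_bound_insert_odd[of r t] by simp

lemma insert_odd_extract_equal:
  assumes adm: "admissible (x # r)" and ins: "insertable t (x # r)"
    and top: "admissible (x # insert_odd t (x # r))" and x: "even x"
  shows "admissible (x # (x - 2) # r) \<and> insertable (t + 2) (x # (x - 2) # r) \<and>
    insert_odd (t + 2) (x # (x - 2) # r) = x # insert_odd t (x # r)"
proof (cases r)
  case Nil
  have "t < x" using insert_odd_less_top[OF adm ins top] .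
  then have "t + 3 \<le> x" using top Nil x by simp
  moreover have "odd t" using ins by (simp add: insertable_def)
  moreover have "even (x - 2)" using x by simp
  ultimately show ?thesis using Nil x \<open>t < x\<close> by (simp add: insertable_def)
next
  case (Cons y' r')
  note skip = insert_odd_skips_top[OF adm[unfolded Cons] ins[unfolded Cons] top[unfolded Cons] x]
  obtain u0 u1 us where w: "insert_odd t (y' # r') = u0 # u1 # us"
    using length_insert_odd[of t "y' # r'"]
    by (cases "insert_odd t (y' # r')"; cases "tl (insert_odd t (y' # r'))") auto
  have "admissible (x # x # u0 # u1 # us)" using top Cons skip(1) w by simp
  then have u0: "u0 + 3 \<le> x" using x by simp
  have adm': "admissible (y' # r')" using adm Cons admissible_ConsD by blast
  have "t \<le> u0" "y' \<le> u0" using insert_odd_dominates[OF adm' skip(5)] w by simp_all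
  have r': "c + 5 \<le> x" if "r' = c # r''" for c r''
  proof -
    have "c + 2 \<le> u0 \<or> odd c \<and> c + 1 \<le> u0"
      using hd_insert_odd_Cons_Cons[OF adm'[unfolded that] skip(5)[unfolded that]]
      by (simp only: w[unfolded that] list.sel)
    then show ?thesis using u0 x by presburger
  qed
  have "admissible (x # (x - 2) # y' # r')"
    using adm' \<open>y' \<le> u0\<close> u0 x r' by (cases r') auto
  moreover have "ins_bound (x # (x - 2) # y' # r') = ins_bound (y' # r') + 2"
    using x u0 by auto
  moreover have "insert_odd (t + 2) (x # (x - 2) # y' # r') = x # x # insert_odd t (y' # r')"
    using \<open>t \<le> u0\<close> u0 by simp
  ultimately show ?thesis using skip(1,5) Cons by (simp add: insertable_def)
qed

lemma insert_odd_extract_gap: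
  assumes adm: "admissible (a # r)" and ins: "insertable t (a # r)"
    and top: "admissible ((a + 2) # insert_odd t (a # r))" and a: "even a"
  shows "admissible (a # a # r) \<and> insertable (t + 2) (a # a # r) \<and>
    insert_odd (t + 2) (a # a # r) = (a + 2) # insert_odd t (a # r)"
proof -
  have t: "odd t" "t < a + 2"
    using ins insert_odd_less_top[OF adm ins top] by (auto simp: insertable_def)
  show ?thesis
  proof (cases r)
    case Nil
    have "t < a"
    proof (cases "a < t")
      case True
      then show ?thesis using top Nil t a by simp
    qed (use insertable_singleton ins Nil in blast)
    moreover have "0 < a" using adm Nil by simp
    ultimately show ?thesis using Nil a t by (simp add: insertable_def)
  next
    case (Cons y' r')
    have "even (a + 2)" using a by simp
    note skip = insert_odd_skips_top[OF adm[unfolded Cons] ins[unfolded Cons] top[unfolded Cons]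
        this order_refl]
    have y'a: "y' \<le> a" using admissible_Cons_Cons_le adm Cons by blast
    have "ins_bound (y' # r') < int t" using skip(5) by (simp add: insertable_def)
    then have "odd y' \<Longrightarrow> y' < t" by (cases r') auto
    then have "y' + 3 \<le> a" using y'a skip(2,3,4) a t by presburger
    then have "admissible (a # a # y' # r')" using adm Cons a by simp
    moreover have "insert_odd (t + 2) (a # a # y' # r') = (a + 2) # a # insert_odd t (y' # r')"
      using skip(4) t a by simp presburger
    ultimately show ?thesis using skip(1,5) Cons a by (simp add: insertable_def)
  qed
qed

lemma insert_odd_extract_apart:
  assumes adm: "admissible r" and ins: "insertable t r"
    and top: "admissible (x # insert_odd t r)" and x: "even x"
    and far: "r \<noteq> [] \<Longrightarrow> hd r \<noteq> x \<and> hd r + 2 \<noteq> x"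
  shows "admissible (x # r) \<and> insertable t (x # r) \<and> insert_odd t (x # r) = x # insert_odd t r"
proof -
  have "t < x" using insert_odd_less_top[OF adm ins top] .
  show ?thesis
  proof (cases r)
    case Nil
    then show ?thesis using ins x \<open>t < x\<close> by (simp add: insertable_def)
  next
    case (Cons a r1)
    obtain w0 ws where w: "insert_odd t r = w0 # ws"
      using length_insert_odd[of t r] by (cases "insert_odd t r") auto
    note dom = insert_odd_dominates[OF adm ins, unfolded w]
    have "a \<le> x" using dom Cons w top admissible_Cons_Cons_le[of x w0 ws] by simp
    have "a \<noteq> x" "a + 2 \<noteq> x" using far Cons by auto
    have "admissible (x # r)"
    proof (cases r1)
      case Nil
      then show ?thesis using Cons adm \<open>a \<le> x\<close> \<open>a \<noteq> x\<close> by (simp add: admissible_hd_pos)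
    next
      case (Cons b r2)
      obtain w1 ws' where "ws = w1 # ws'"
        using length_insert_odd[of t r] w \<open>r = a # r1\<close> Cons by (cases ws) auto
      then have "b + 3 \<le> x" using dom top w x \<open>r = a # r1\<close> Cons by auto
      then show ?thesis using adm \<open>r = a # r1\<close> Cons \<open>a \<le> x\<close> \<open>a \<noteq> x\<close> by simp
    qed
    moreover have "odd a \<or> a + 4 \<le> x"
      using \<open>a \<le> x\<close> \<open>a \<noteq> x\<close> \<open>a + 2 \<noteq> x\<close> x by presburger
    then have "apart x r" using Cons by (simp add: apart_def)
    moreover have "insert_odd t (x # r) = x # insert_odd t r"
      using Cons \<open>t < x\<close> \<open>a \<noteq> x\<close> \<open>a + 2 \<noteq> x\<close> by auto
    ultimately show ?thesis using ins x ins_bound_Cons_apart by (simp add: insertable_def)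
  qed
qed

lemma insert_odd_extract_step:
  assumes "admissible r" "insertable t r" "admissible (x # insert_odd t r)" "even x"
    and step: "extract_step x (t, r) = (t', r')"
  shows "admissible r' \<and> insertable t' r' \<and> insert_odd t' r' = x # insert_odd t r"
proof -
  consider (equal) r1 where "r = x # r1" | (gap) a r1 where "r = a # r1" "x = a + 2"
    | (apart) "r \<noteq> [] \<Longrightarrow> hd r \<noteq> x \<and> hd r + 2 \<noteq> x"
    by (cases r) auto
  then show ?thesis
  proof cases
    case equal
    then show ?thesis using insert_odd_extract_equal assms by auto
  next
    case gap
    then show ?thesis using insert_odd_extract_gap assms by auto
  next
    case apart
    then have "t' = t" "r' = x # r" using step by (cases r; auto)+
    then show ?thesis using insert_odd_extract_apart[OF assms(1-4) apart] by simp
  qed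
qed

lemma extract_odd_inverse:
  "admissible w \<Longrightarrow> \<exists>x\<in>set w. odd x \<Longrightarrow> extract_odd w = (t, r) \<Longrightarrow>
    admissible r \<and> insertable t r \<and> insert_odd t r = w"
proof (induction w arbitrary: t r)
  case (Cons x w)
  show ?case
  proof (cases "odd x")
    case True
    then show ?thesis using Cons.prems ins_bound_less insert_odd_top admissible_ConsD
      by (auto simp: insertable_def)
  next
    case False
    obtain t1 r1 where w: "extract_odd w = (t1, r1)" by fastforce
    have "admissible r1 \<and> insertable t1 r1 \<and> insert_odd t1 r1 = w"
      using Cons.IH[OF admissible_ConsD[OF Cons.prems(1)] _ w] Cons.prems(2) False by auto
    then show ?thesis
      using insert_odd_extract_step[of r1 t1 x t r] Cons.prems(1,3) False w by auto
  qed
qed simp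

section \<open>The bijection\<close>

fun odd_parts_above :: "nat \<Rightarrow> nat list \<Rightarrow> bool" where
  "odd_parts_above n [] = True"
| "odd_parts_above n [a] = (odd a \<and> 2 * n + 1 \<le> a)"
| "odd_parts_above n (a # b # z) = (odd a \<and> b < a \<and> odd_parts_above n (b # z))"

lemma odd_parts_above_iff:
  "odd_parts_above n z \<longleftrightarrow> is_partition z \<and> distinct z \<and> (\<forall>x\<in>set z. odd x \<and> 2 * n + 1 \<le> x)"
proof
  show "odd_parts_above n z \<Longrightarrow> is_partition z \<and> distinct z \<and> (\<forall>x\<in>set z. odd x \<and> 2 * n + 1 \<le> x)"
  proof (induction n z rule: odd_parts_above.induct)
    case (3 n a b z)
    then have IH: "is_partition (b # z) \<and> distinct (b # z) \<and>
        (\<forall>x\<in>set (b # z). odd x \<and> 2 * n + 1 \<le> x)"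
      and ba: "b < a" "odd a" by simp_all
    then have "\<forall>x\<in>set (b # z). x < a" by (auto simp: is_partition_def)
    then show ?case using IH ba by (auto simp: is_partition_def odd_pos)
  qed (auto simp: is_partition_def odd_pos)
  show "is_partition z \<and> distinct z \<and> (\<forall>x\<in>set z. odd x \<and> 2 * n + 1 \<le> x) \<Longrightarrow> odd_parts_above n z"
  proof (induction n z rule: odd_parts_above.induct)
    case (3 n a b z)
    then show ?case by (auto simp: is_partition_def)
  qed simp_all
qed

definition Phi :: "nat list \<Rightarrow> nat list \<Rightarrow> nat list" where
  "Phi l z = foldr insert_odd z l"

fun Psi :: "nat \<Rightarrow> nat list \<Rightarrow> nat list \<times> nat list" where
  "Psi 0 w = (w, [])"
| "Psi (Suc n) w = (let (t, r) = extract_odd w; (l, z) = Psi n r in (l, t # z))"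

lemma Phi_Cons: "Phi l (a # z) = insert_odd a (Phi l z)"
  by (simp add: Phi_def)

lemma odd_parts_above_Cons: "odd_parts_above n (a # z) \<Longrightarrow> odd_parts_above n z"
  by (cases z) auto

lemma admissible_Phi:
  assumes l: "admissible l" "\<forall>x\<in>set l. even x"
  shows "odd_parts_above (close_pairs l) z \<Longrightarrow>
    admissible (Phi l z) \<and>
    ins_bound (Phi l z) = (case z of [] \<Rightarrow> 2 * int (close_pairs l) - 1 | a # _ \<Rightarrow> int a)"
proof (induction z)
  case Nil
  then show ?case using l ins_bound_even by (simp add: Phi_def)
next
  case (Cons a z)
  have "insertable a (Phi l z)"
    using Cons.IH[OF odd_parts_above_Cons[OF Cons.prems]] Cons.prems
    by (cases z) (auto simp: insertable_def)
  then show ?case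
    using Cons.IH[OF odd_parts_above_Cons[OF Cons.prems]] admissible_insert_odd ins_bound_insert_odd
    by (simp add: Phi_Cons)
qed

lemma insertable_Phi:
  "admissible l \<Longrightarrow> \<forall>x\<in>set l. even x \<Longrightarrow> odd_parts_above (close_pairs l) (a # z) \<Longrightarrow>
    insertable a (Phi l z)"
  using admissible_Phi[of l z] odd_parts_above_Cons[of _ a z]
  by (cases z) (auto simp: insertable_def)

lemma Phi_sum_length_count:
  assumes l: "admissible l" "\<forall>x\<in>set l. even x"
  shows "odd_parts_above (close_pairs l) z \<Longrightarrow>
    sum_list (Phi l z) = sum_list l + sum_list z \<and> length (Phi l z) = length l + length z \<and>
    length (filter odd (Phi l z)) = length z"
proof (induction z)
  case Nil
  then show ?case using l by (simp add: Phi_def filter_empty_conv)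
next
  case (Cons a z)
  note adm = conjunct1[OF admissible_Phi[OF l odd_parts_above_Cons[OF Cons.prems]]]
  note ins = insertable_Phi[OF l Cons.prems]
  show ?case using Cons.IH[OF odd_parts_above_Cons[OF Cons.prems]]
      sum_list_count_odd_insert_odd[OF adm ins] length_insert_odd
    by (simp add: Phi_Cons)
qed

lemma Psi_Phi:
  assumes l: "admissible l" "\<forall>x\<in>set l. even x"
  shows "odd_parts_above (close_pairs l) z \<Longrightarrow> Psi (length z) (Phi l z) = (l, z)"
proof (induction z)
  case (Cons a z)
  note adm = conjunct1[OF admissible_Phi[OF l odd_parts_above_Cons[OF Cons.prems]]]
  have "extract_odd (Phi l (a # z)) = (a, Phi l z)"
    using extract_odd_insert_odd[OF adm insertable_Phi[OF l Cons.prems]] by (simp add: Phi_Cons)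
  then show ?case using Cons.IH[OF odd_parts_above_Cons[OF Cons.prems]] by simp
qed (simp add: Phi_def)

lemma Phi_Psi:
  "admissible w \<Longrightarrow> length (filter odd w) = n \<Longrightarrow> Psi n w = (l, z) \<Longrightarrow>
    admissible l \<and> (\<forall>x\<in>set l. even x) \<and> odd_parts_above (close_pairs l) z \<and> Phi l z = w"
proof (induction n arbitrary: w l z)
  case 0
  then show ?case by (auto simp: Phi_def filter_empty_conv)
next
  case (Suc n)
  have "\<exists>x\<in>set w. odd x" using Suc.prems(2) by (metis filter_False length_0_conv nat.distinct(1))
  moreover obtain t r where tr: "extract_odd w = (t, r)" by (cases "extract_odd w")
  ultimately have r: "admissible r" "insertable t r" "insert_odd t r = w"
    using extract_odd_inverse Suc.prems(1) by blast+
  obtain l' z' where lz': "Psi n r = (l', z')" by (cases "Psi n r")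
  have "length (filter odd r) = n"
    using sum_list_count_odd_insert_odd[OF r(1,2)] r(3) Suc.prems(2) by simp
  note IH = Suc.IH[OF r(1) this lz']
  have lz: "l = l'" "z = t # z'" using Suc.prems(3) tr lz' by auto
  have "odd_parts_above (close_pairs l') (t # z')"
  proof (cases z')
    case Nil
    then have "ins_bound r = 2 * int (close_pairs l') - 1" using admissible_Phi[of l' z'] IH by simp
    then show ?thesis using r(2) Nil unfolding insertable_def by simp presburger
  next
    case (Cons b z'')
    then have "ins_bound r = int b" using admissible_Phi[of l' z'] IH by simp
    then show ?thesis using r(2) Cons IH unfolding insertable_def by simp
  qed
  then show ?case using IH r(3) lz by (simp add: Phi_Cons)
qed

lemma mem_F33_iff:
  "(l, z) \<in> F33 \<longleftrightarrow> admissible l \<and> (\<forall>x\<in>set l. even x) \<and> odd_parts_above (close_pairs l) z"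
proof -
  have "(l, z) \<in> F33 \<longleftrightarrow> admissible l \<and> (\<forall>x\<in>set l. even x) \<and> odd_parts_above (N2 l) z"
    by (simp add: F33_def E33_def mem_C33_iff_admissible odd_parts_above_iff)
  then show ?thesis using N2_eq_close_pairs by auto
qed

lemma bij_betw_Phi: "bij_betw (\<lambda>(l, z). Phi l z) F33 C33"
proof (rule bij_betw_byWitness[where f' = "\<lambda>w. Psi (length (filter odd w)) w"])
  have "Psi (length (filter odd (Phi l z))) (Phi l z) = (l, z) \<and> Phi l z \<in> C33"
    if "(l, z) \<in> F33" for l z
  proof -
    have lz: "admissible l" "\<forall>x\<in>set l. even x" "odd_parts_above (close_pairs l) z"
      using that by (simp_all add: mem_F33_iff)
    have "length (filter odd (Phi l z)) = length z"
      using Phi_sum_length_count[OF lz(1,2)] lz(3) by blast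
    then show ?thesis
      using Psi_Phi[OF lz] admissible_Phi[OF lz(1,2) lz(3)] by (simp add: mem_C33_iff_admissible)
  qed
  then show "\<forall>a\<in>F33.
      Psi (length (filter odd (case a of (l, z) \<Rightarrow> Phi l z))) (case a of (l, z) \<Rightarrow> Phi l z) = a"
    "(\<lambda>(l, z). Phi l z) ` F33 \<subseteq> C33"
    by auto
  have "(case Psi (length (filter odd w)) w of (l, z) \<Rightarrow> Phi l z) = w \<and>
      Psi (length (filter odd w)) w \<in> F33" if "w \<in> C33" for w
  proof -
    obtain l z where lz: "Psi (length (filter odd w)) w = (l, z)"
      by (cases "Psi (length (filter odd w)) w")
    have "admissible w" using that by (simp add: mem_C33_iff_admissible)
    from Phi_Psi[OF this refl lz] show ?thesis using lz by (simp add: mem_F33_iff)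
  qed
  then show "\<forall>w\<in>C33. (case Psi (length (filter odd w)) w of (l, z) \<Rightarrow> Phi l z) = w"
    "(\<lambda>w. Psi (length (filter odd w)) w) ` C33 \<subseteq> F33" by auto
qed

theorem theorem5p1:
  shows "\<exists>\<Phi>. bij_betw \<Phi> F33 C33 \<and>
    (\<forall>p z. (p, z) \<in> F33 \<longrightarrow>
        sum_list (\<Phi> (p, z)) = sum_list p + sum_list z \<and>
        length (\<Phi> (p, z)) = length p + length z)"
proof (intro exI conjI allI impI)
  show "bij_betw (\<lambda>(l, z). Phi l z) F33 C33" by (rule bij_betw_Phi)
  fix p z assume "(p, z) \<in> F33"
  then show "sum_list ((\<lambda>(l, z). Phi l z) (p, z)) = sum_list p + sum_list z"
    "length ((\<lambda>(l, z). Phi l z) (p, z)) = length p + length z"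
    using Phi_sum_length_count by (simp_all add: mem_F33_iff)
qed

end
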